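(* Let $S$ be a nonnegative relation in $\mathfrak H$ with $\mathcal W(S)=\{0\}$, and let $H$ be a selfadjoint extension of $S$. Then $\mathcal W(H)=\{0\}$ if and only if $H$ is a nonnegative extremal extension of $S$ (extremal with respect to $0$).
   Context: Linear relations in $\mathfrak H$ are linear subspaces of $\mathfrak H\times\mathfrak H$; $T^*$ adjoint; selfadjoint means $T=T^*$. Numerical range $\mathcal W(T)=\{(\varphi',\varphi):\{\varphi,\varphi'\}\in T,\|\varphi\|=1\}$ (and $\{0\}$ if $\mathrm{dom}\,T=\{0\}$). $S$ nonnegative means $(\varphi',\varphi)\ge0$ for all $\{\varphi,\varphi'\}\in S$. A selfadjoint extension $H$ of $S$ is extremal with respect to $0$ if for every $\{f,f'\}\in H$, $\inf\{(f'-h',f-h):\{h,h'\}\in S\}=0$. *)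

theory Defs
  imports "HOL-Analysis.Analysis"
begin

text \<open>The inner product is linear in the first argument and conjugate-linear in the second,
  matching the convention (phi', phi) of the paper.\<close>

class chilbert_space = ab_group_add +
  fixes scaleC :: "complex \<Rightarrow> 'a \<Rightarrow> 'a"
    and cinner :: "'a \<Rightarrow> 'a \<Rightarrow> complex"
  assumes scaleC_add_right: "scaleC a (x + y) = scaleC a x + scaleC a y"
    and scaleC_add_left: "scaleC (a + b) x = scaleC a x + scaleC b x"
    and scaleC_scaleC: "scaleC a (scaleC b x) = scaleC (a * b) x"
    and scaleC_one: "scaleC 1 x = x"
    and cinner_add_left: "cinner (x + y) z = cinner x z + cinner y z"
    and cinner_scaleC_left: "cinner (scaleC a x) y = a * cinner x y"
    and cinner_commute: "cinner y x = cnj (cinner x y)"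
    and cinner_self_real: "Im (cinner x x) = 0"
    and cinner_self_nonneg: "0 \<le> Re (cinner x x)"
    and cinner_self_eq_zero: "cinner x x = 0 \<longleftrightarrow> x = 0"
    and complete:
      "(\<forall>e::real>0. \<exists>N::nat. \<forall>m\<ge>N. \<forall>n\<ge>N. sqrt (Re (cinner (X m - X n) (X m - X n))) < e)
        \<Longrightarrow> (\<exists>L. \<forall>e>0. \<exists>N::nat. \<forall>n\<ge>N. sqrt (Re (cinner (X n - L) (X n - L))) < e)"

definition cnorm :: "'a::chilbert_space \<Rightarrow> real" where
  "cnorm x = sqrt (Re (cinner x x))"

text \<open>A linear relation in H is a linear subspace of H \<times> H; pairs (f, f') stand for {f, f'}.\<close>

definition linear_relation :: "('a::chilbert_space \<times> 'a) set \<Rightarrow> bool" where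
  "linear_relation T \<longleftrightarrow> (0, 0) \<in> T
     \<and> (\<forall>p\<in>T. \<forall>q\<in>T. p + q \<in> T)
     \<and> (\<forall>c. \<forall>(f, f')\<in>T. (scaleC c f, scaleC c f') \<in> T)"

definition rel_dom :: "('a \<times> 'a) set \<Rightarrow> 'a set" where
  "rel_dom T = fst ` T"

definition adjoint :: "('a::chilbert_space \<times> 'a) set \<Rightarrow> ('a \<times> 'a) set" where
  "adjoint T = {(g, g'). \<forall>(f, f')\<in>T. cinner f' g = cinner f g'}"

definition selfadjoint :: "('a::chilbert_space \<times> 'a) set \<Rightarrow> bool" where
  "selfadjoint T \<longleftrightarrow> T = adjoint T"

definition numerical_range :: "('a::chilbert_space \<times> 'a) set \<Rightarrow> complex set" where
  "numerical_range T =
     (if rel_dom T = {0} then {0}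
      else {cinner f' f | f f'. (f, f') \<in> T \<and> cnorm f = 1})"

definition nonnegative :: "('a::chilbert_space \<times> 'a) set \<Rightarrow> bool" where
  "nonnegative T \<longleftrightarrow> (\<forall>(f, f')\<in>T. Im (cinner f' f) = 0 \<and> 0 \<le> Re (cinner f' f))"

text \<open>Extremality with respect to 0.  For a selfadjoint extension H of S the numbers
  (f' - h', f - h) are real, so the infimum is taken (in the extended reals) over their real parts.\<close>

definition extremal :: "('a::chilbert_space \<times> 'a) set \<Rightarrow> ('a \<times> 'a) set \<Rightarrow> bool" where
  "extremal S H \<longleftrightarrow>
     (\<forall>(f, f')\<in>H. (INF (h, h')\<in>S. ereal (Re (cinner (f' - h') (f - h)))) = 0)"

end

theory Submission
  imports Defs
begin

text \<open>If \<open>\<W>(H) = {0}\<close>, every difference \<open>{f - h, f' - h'}\<close> of elements of \<open>H\<close> has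
  \<open>(f' - h', f - h) = 0\<close>, so the infimum defining extremality is identically \<open>0\<close>.
  Conversely, for \<open>{f, f'} \<in> H\<close> and \<open>{h, h'} \<in> S\<close> selfadjointness and \<open>(h', h) = 0\<close> give
  \<open>Re (f' - h', f - h) = Re (f', f) - 2 Re (f', h)\<close>. Since \<open>S\<close> is closed under real scaling,
  a lower bound on this affine expression forces \<open>Re (f', h) = 0\<close>; the infimum is then
  \<open>Re (f', f)\<close>, which extremality makes \<open>0\<close>, and nonnegativity kills the imaginary part.\<close>

context chilbert_space begin

lemma cinner_zero_left [simp]: "cinner 0 z = 0"
proof -
  have "cinner (0 + 0) z = cinner 0 z + cinner 0 z" by (rule cinner_add_left)
  then show ?thesis by simp
qed

lemma cinner_zero_right [simp]: "cinner z 0 = 0"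
  using cinner_commute[of 0 z] by simp

lemma cinner_add_right: "cinner x (y + z) = cinner x y + cinner x z"
  using cinner_commute[of x "y + z"] cinner_commute[of y x] cinner_commute[of z x]
  by (simp add: cinner_add_left)

lemma cinner_scaleC_right: "cinner x (scaleC a y) = cnj a * cinner x y"
  using cinner_commute[of x "scaleC a y"] cinner_commute[of y x]
  by (simp add: cinner_scaleC_left)

lemma cinner_minus_left: "cinner (- x) y = - cinner x y"
  using cinner_add_left[of x "- x" y] by (simp add: complex_eq_iff)

lemma cinner_minus_right: "cinner y (- x) = - cinner y x"
  using cinner_commute[of y "- x"] cinner_commute[of x y] by (simp add: cinner_minus_left)

lemma cinner_diff_left: "cinner (x - y) z = cinner x z - cinner y z"
  by (simp only: diff_conv_add_uminus cinner_add_left cinner_minus_left) simp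

lemma cinner_diff_right: "cinner z (x - y) = cinner z x - cinner z y"
  by (simp only: diff_conv_add_uminus cinner_add_right cinner_minus_right) simp

lemma scaleC_zero [simp]: "scaleC 0 x = 0"
proof -
  have "scaleC (0 + 0) x = scaleC 0 x + scaleC 0 x" by (rule scaleC_add_left)
  then show ?thesis by simp
qed

lemma scaleC_minus_one: "scaleC (- 1) x = - x"
  using scaleC_add_left[of "- 1" 1 x] by (simp add: scaleC_one eq_neg_iff_add_eq_0)

lemma cinner_self_pos: "x \<noteq> 0 \<Longrightarrow> 0 < Re (cinner x x)"
  using cinner_self_eq_zero[of x] cinner_self_real[of x] cinner_self_nonneg[of x]
  by (auto simp: complex_eq_iff)

lemma cinner_scaleC_of_real:
  "cinner (scaleC (of_real r) x) (scaleC (of_real r) y) = of_real (r * r) * cinner x y"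
  by (simp add: cinner_scaleC_left cinner_scaleC_right mult.assoc)

end

lemma cnorm_scaleC_normalize:
  fixes x :: "'a::chilbert_space"
  assumes "x \<noteq> 0"
  shows "cnorm (scaleC (of_real (1 / sqrt (Re (cinner x x)))) x) = 1"
proof -
  define r where "r = 1 / sqrt (Re (cinner x x))"
  have "r * r * Re (cinner x x) = 1"
    unfolding r_def using cinner_self_pos[OF assms] by (simp add: field_simps)
  then show ?thesis
    unfolding r_def[symmetric] cnorm_def cinner_scaleC_of_real by simp
qed

lemma linear_relation_scaleC:
  "linear_relation T \<Longrightarrow> (f, f') \<in> T \<Longrightarrow> (scaleC c f, scaleC c f') \<in> T"
  unfolding linear_relation_def by blast

lemma linear_relation_diff:
  assumes lin: "linear_relation T" and "(f, f') \<in> T" "(h, h') \<in> T"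
  shows "(f - h, f' - h') \<in> T"
proof -
  have "(- h, - h') \<in> T"
    using linear_relation_scaleC[OF lin assms(3), of "- 1"] by (simp add: scaleC_minus_one)
  then have "(f, f') + (- h, - h') \<in> T" using lin assms(2) unfolding linear_relation_def by blast
  then show ?thesis by simp
qed

lemma linear_relation_adjoint: "linear_relation (adjoint T)"
  unfolding linear_relation_def adjoint_def
  by (fastforce simp: cinner_add_right cinner_scaleC_right)

lemma selfadjoint_imp_linear_relation: "selfadjoint H \<Longrightarrow> linear_relation H"
  unfolding selfadjoint_def by (metis linear_relation_adjoint)

lemma selfadjoint_cinner_sym:
  "selfadjoint H \<Longrightarrow> (f, f') \<in> H \<Longrightarrow> (h, h') \<in> H \<Longrightarrow> cinner f' h = cinner f h'"
  unfolding selfadjoint_def adjoint_def by blast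

lemma numerical_range_eq_zero_iff:
  fixes T :: "('a::chilbert_space \<times> 'a) set"
  assumes lin: "linear_relation T"
  shows "numerical_range T = {0} \<longleftrightarrow> (\<forall>(f, f')\<in>T. cinner f' f = 0)"
proof (cases "rel_dom T = {0}")
  case True
  then have "\<forall>(f, f')\<in>T. f = 0" unfolding rel_dom_def by force
  with True show ?thesis unfolding numerical_range_def by auto
next
  case False
  define W where "W = {cinner f' f | f f'. (f, f') \<in> T \<and> cnorm f = 1}"
  have W: "numerical_range T = W" unfolding numerical_range_def W_def using False by simp
  have scaled: "of_real (r * r) * cinner f' f \<in> W"
    if "(f, f') \<in> T" "f \<noteq> 0" "r = 1 / sqrt (Re (cinner f f))" for f f' r
    using that linear_relation_scaleC[OF lin, of f f' "of_real r"]
      cnorm_scaleC_normalize[of f] cinner_scaleC_of_real[of r f' f]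
    unfolding W_def by force
  have r_pos: "0 < r * r" if "r = 1 / sqrt (Re (cinner f f))" "f \<noteq> 0" for r and f :: 'a
    using that cinner_self_pos[of f] by simp
  obtain g g' where g: "(g, g') \<in> T" "g \<noteq> 0"
    using False lin unfolding rel_dom_def linear_relation_def by force
  show ?thesis
  proof
    assume "numerical_range T = {0}"
    then have W0: "W = {0}" using W by simp
    show "\<forall>(f, f')\<in>T. cinner f' f = 0"
    proof clarify
      fix f f' assume "(f, f') \<in> T"
      then show "cinner f' f = 0"
        using scaled[of f f'] W0 r_pos[of _ f] by (cases "f = 0") auto
    qed
  next
    assume zero: "\<forall>(f, f')\<in>T. cinner f' f = 0"
    then have "W \<subseteq> {0}" unfolding W_def by auto
    moreover have "0 \<in> W" using scaled[OF g] zero g(1) by auto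
    ultimately show "numerical_range T = {0}" using W by auto
  qed
qed

lemma affine_nonneg_imp_slope_zero:
  fixes a b :: real
  assumes "\<And>t. 0 \<le> a - t * b"
  shows "b = 0"
proof (rule ccontr)
  assume "b \<noteq> 0"
  then have "a - ((a + 1) / b) * b = - 1" by simp
  then show False using assms[of "(a + 1) / b"] by linarith
qed

lemma numerical_range_zero_imp_extremal:
  fixes S H :: "('a::chilbert_space \<times> 'a) set"
  assumes "linear_relation S" "selfadjoint H" "S \<subseteq> H" "numerical_range H = {0}"
  shows "extremal S H"
  unfolding extremal_def
proof clarify
  fix f f' assume f: "(f, f') \<in> H"
  have linH: "linear_relation H" using selfadjoint_imp_linear_relation[OF assms(2)] .
  have "cinner (f' - h') (f - h) = 0" if "(h, h') \<in> S" for h h'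
    using linear_relation_diff[OF linH f, of h h'] that assms(3,4)
      numerical_range_eq_zero_iff[OF linH] by blast
  then have "(INF (h, h')\<in>S. ereal (Re (cinner (f' - h') (f - h)))) = (INF p\<in>S. 0)"
    by (intro INF_cong) (auto simp: zero_ereal_def)
  also have "\<dots> = 0" using assms(1) unfolding linear_relation_def by (subst INF_const) auto
  finally show "(INF (h, h')\<in>S. ereal (Re (cinner (f' - h') (f - h)))) = 0" .
qed

lemma Re_cinner_diff_selfadjoint:
  assumes "selfadjoint H" "(f, f') \<in> H" "(h, h') \<in> H" "cinner h' h = 0"
  shows "Re (cinner (f' - h') (f - h)) = Re (cinner f' f) - 2 * Re (cinner f' h)"
proof -
  have "cinner h' f = cnj (cinner f' h)"
    using selfadjoint_cinner_sym[OF assms(1-3)] cinner_commute[of f h'] by simp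
  then show ?thesis using assms(4) by (simp add: cinner_diff_left cinner_diff_right)
qed

lemma extremal_imp_Re_cinner_zero:
  fixes S H :: "('a::chilbert_space \<times> 'a) set"
  assumes linS: "linear_relation S" and WS: "numerical_range S = {0}"
    and H: "selfadjoint H" "S \<subseteq> H" and ext: "extremal S H" and f: "(f, f') \<in> H"
  shows "Re (cinner f' f) = 0"
proof -
  let ?gap = "\<lambda>(h, h'). ereal (Re (cinner (f' - h') (f - h)))"
  have gap: "Re (cinner (f' - h') (f - h)) = Re (cinner f' f) - 2 * Re (cinner f' h)"
    if "(h, h') \<in> S" for h h'
    using Re_cinner_diff_selfadjoint[OF H(1) f, of h h'] that H(2) WS
      numerical_range_eq_zero_iff[OF linS] by blast
  have INF0: "(INF p\<in>S. ?gap p) = 0" using ext f unfolding extremal_def by blast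
  have "Re (cinner f' h) = 0" if h: "(h, h') \<in> S" for h h'
  proof -
    have "0 \<le> Re (cinner f' f) - t * (2 * Re (cinner f' h))" for t
    proof -
      have th: "(scaleC (of_real t) h, scaleC (of_real t) h') \<in> S"
        using linear_relation_scaleC[OF linS h] .
      have "(INF p\<in>S. ?gap p) \<le> ?gap (scaleC (of_real t) h, scaleC (of_real t) h')"
        by (rule INF_lower[OF th])
      then show ?thesis using INF0 gap[OF th] by (simp add: cinner_scaleC_right zero_ereal_def)
    qed
    then show ?thesis using affine_nonneg_imp_slope_zero by fastforce
  qed
  then have "(INF p\<in>S. ?gap p) = (INF p\<in>S. ereal (Re (cinner f' f)))"
    using gap by (intro INF_cong) auto
  also have "\<dots> = ereal (Re (cinner f' f))"
    using linS unfolding linear_relation_def by (subst INF_const) auto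
  finally show ?thesis using INF0 by (simp add: zero_ereal_def)
qed

theorem proposition8p3:
  fixes S H :: "('a::chilbert_space \<times> 'a) set"
  assumes "linear_relation S"
    and "nonnegative S"
    and "numerical_range S = {0}"
    and "selfadjoint H"
    and "S \<subseteq> H"
  shows "numerical_range H = {0} \<longleftrightarrow> nonnegative H \<and> extremal S H"
proof -
  have linH: "linear_relation H" using selfadjoint_imp_linear_relation[OF assms(4)] .
  show ?thesis
  proof
    assume WH: "numerical_range H = {0}"
    then have "nonnegative H"
      unfolding nonnegative_def numerical_range_eq_zero_iff[OF linH] by auto
    then show "nonnegative H \<and> extremal S H"
      using numerical_range_zero_imp_extremal[OF assms(1,4,5) WH] by blast
  next
    assume R: "nonnegative H \<and> extremal S H"
    have "cinner f' f = 0" if "(f, f') \<in> H" for f f'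
      using extremal_imp_Re_cinner_zero[OF assms(1,3-5)] R that
      unfolding nonnegative_def by (auto simp: complex_eq_iff)
    then show "numerical_range H = {0}" using numerical_range_eq_zero_iff[OF linH] by blast
  qed
qed

end
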